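(* Let $\mathcal C$ be an energy timed path forming a cycle from state $s_0$ back to $s_0$, and let $L\in\mathbb Q$. For $U\in\mathbb Q$ let $\mathcal R_{\mathcal C}(w_0,w_1,U)$ denote $\mathcal R^{[L;U]}_{\mathcal C}(w_0,w_1)$, and define $$\mathcal R^\infty_{\mathcal C}(a,b,U)\iff L\le a\le b\le U\ \wedge\ \forall w_0\in[a;b].\ \exists w_1\in[a;b].\ \mathcal R_{\mathcal C}(w_0,w_1,U).$$ Assume the set $\{(a,b,U)\mid \mathcal R^\infty_{\mathcal C}(a,b,U)\}$ is nonempty. Then there is a least value $a^{\mathcal C}_{\min}\in\mathbb Q$ such that $\{(b,U)\mid \mathcal R^\infty_{\mathcal C}(a^{\mathcal C}_{\min},b,U)\}\neq\emptyset$, and: (1) for every energy level $w<a^{\mathcal C}_{\min}$ and every $U$, there is no infinite run from $(s_0,\mathbf 0,w)$ iterating $\mathcal C$ forever and satisfying the energy constraint $[L;U]$; (2) for every $w\ge a^{\mathcal C}_{\min}$ there exist $U$ and an infinite run from $(s_0,\mathbf 0,w)$ iterating $\mathcal C$ forever and satisfying $[L;U]$.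
   Context: An energy timed automaton is a timed automaton with closed (non-strict) clock constraints, a rational energy rate $r(s)$ in each state and a rational energy update $u$ on each transition; during a delay $d\ge0$ in state $s$ the energy grows by $d\cdot r(s)$, and a transition adds $u$. An energy timed path (ETP) from $s_0$ to $s_n$ is such an automaton whose states $s_0,\dots,s_n$ are linked by exactly one transition from $s_i$ to $s_{i+1}$ each; a cycle is an ETP whose last state is identified with its first state $s_0$. A run satisfies the energy constraint $[L;U]$ if all its energy levels lie in $[L;U]$. For an energy constraint $E$, $\mathcal R^E_{\mathcal C}(w_0,w_1)$ holds iff there is a finite run of $\mathcal C$ from $(s_0,\mathbf 0,w_0)$ to $(s_0,\mathbf 0,w_1)$ satisfying $E$ ($\mathbf 0$ the zero clock valuation). An infinite run iterating $\mathcal C$ forever is a concatenation of infinitely many runs of $\mathcal C$, each starting and ending with all clocks $0$, the final energy of one being the initial energy of the next. *)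

theory Defs
  imports Complex_Main
begin

text \<open>Closed (non-strict) atomic clock constraints x <= k and x >= k with
  integer (natural) constants k; x = k is the conjunction of both.
  A clock constraint is a conjunction (list) of atoms.\<close>

datatype 'c atom = CLe 'c nat | CGe 'c nat

type_synonym 'c constr = "'c atom list"

fun sat_atom :: "'c atom \<Rightarrow> ('c \<Rightarrow> real) \<Rightarrow> bool" where
  "sat_atom (CLe x k) v = (v x \<le> real k)"
| "sat_atom (CGe x k) v = (v x \<ge> real k)"

definition sat :: "'c constr \<Rightarrow> ('c \<Rightarrow> real) \<Rightarrow> bool" where
  "sat g v = (\<forall>a\<in>set g. sat_atom a v)"

text \<open>An energy timed path with states s_0, ..., s_len (state s_i is index i).
  inv i: invariant of s_i; rate i: energy rate of s_i; for i < len, the unique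
  transition from s_i to s_(i+1) has guard guard i, energy update upd i and
  resets the clocks in reset i.\<close>

record 'c etp =
  len   :: nat
  inv   :: "nat \<Rightarrow> 'c constr"
  rate  :: "nat \<Rightarrow> rat"
  guard :: "nat \<Rightarrow> 'c constr"
  upd   :: "nat \<Rightarrow> rat"
  reset :: "nat \<Rightarrow> 'c set"

text \<open>A cycle: the last state s_len is identified with s_0.\<close>

definition is_cycle :: "'c etp \<Rightarrow> bool" where
  "is_cycle C \<longleftrightarrow> 0 < len C \<and> inv C (len C) = inv C 0 \<and> rate C (len C) = rate C 0"

definition zero_val :: "'c \<Rightarrow> real" where
  "zero_val = (\<lambda>_. 0)"

definition etp_run :: "'c etp \<Rightarrow> rat \<Rightarrow> rat \<Rightarrow> ('c \<Rightarrow> real) \<Rightarrow> real \<Rightarrow> ('c \<Rightarrow> real) \<Rightarrow> real \<Rightarrow> bool" where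
  "etp_run C L U v0 w0 v1 w1 \<longleftrightarrow>
     (\<exists>(d :: nat \<Rightarrow> real) (v :: nat \<Rightarrow> 'c \<Rightarrow> real) (e :: nat \<Rightarrow> real).
        v 0 = v0 \<and> e 0 = w0 \<and> v (len C) = v1 \<and> e (len C) = w1 \<and>
        (\<forall>i < len C.
           0 \<le> d i \<and>
           (\<forall>t. 0 \<le> t \<and> t \<le> d i \<longrightarrow>
                 sat (inv C i) (\<lambda>x. v i x + t) \<and>
                 real_of_rat L \<le> e i + t * real_of_rat (rate C i) \<and>
                 e i + t * real_of_rat (rate C i) \<le> real_of_rat U) \<and>
           sat (guard C i) (\<lambda>x. v i x + d i) \<and>
           v (Suc i) = (\<lambda>x. if x \<in> reset C i then 0 else v i x + d i) \<and>
           e (Suc i) = e i + d i * real_of_rat (rate C i) + real_of_rat (upd C i)) \<and>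
        sat (inv C (len C)) v1 \<and>
        real_of_rat L \<le> w1 \<and> w1 \<le> real_of_rat U)"

definition R :: "'c etp \<Rightarrow> rat \<Rightarrow> real \<Rightarrow> real \<Rightarrow> rat \<Rightarrow> bool" where
  "R C L w0 w1 U \<longleftrightarrow> etp_run C L U zero_val w0 zero_val w1"

definition Rinf :: "'c etp \<Rightarrow> rat \<Rightarrow> rat \<Rightarrow> rat \<Rightarrow> rat \<Rightarrow> bool" where
  "Rinf C L a b U \<longleftrightarrow> L \<le> a \<and> a \<le> b \<and> b \<le> U \<and>
     (\<forall>w0. real_of_rat a \<le> w0 \<and> w0 \<le> real_of_rat b \<longrightarrow>
        (\<exists>w1. real_of_rat a \<le> w1 \<and> w1 \<le> real_of_rat b \<and> R C L w0 w1 U))"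

text \<open>An infinite run from (s_0, 0, w) iterating C forever satisfying [L;U]:
  a concatenation of infinitely many runs of C, each from clocks 0 to clocks 0,
  the final energy of one being the initial energy of the next.\<close>

definition inf_run :: "'c etp \<Rightarrow> rat \<Rightarrow> rat \<Rightarrow> real \<Rightarrow> bool" where
  "inf_run C L U w \<longleftrightarrow>
     (\<exists>ws :: nat \<Rightarrow> real. ws 0 = w \<and> (\<forall>k. R C L (ws k) (ws (Suc k)) U))"

end

theory Submission
  imports Defs "HOL-Analysis.Elementary_Metric_Spaces"
begin

text \<open>A run of the cycle is determined by its delays, and because clock constraints are closed
  and convex and the energy is affine along a delay, the tuples (initial energy, final energy,
  upper bound, delays) admitting a run form a rational polyhedron. Consequently the runs are
  closed under convex combinations, so \<open>R\<^sup>\<infinity>(a, b, U)\<close> only needs runs back into \<open>[a; b]\<close>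
  from the two endpoints, and the set of triples \<open>(a, b, U)\<close> with \<open>R\<^sup>\<infinity>(a, b, U)\<close> is the
  projection of a rational polyhedron. Fourier--Motzkin elimination shows that the least \<open>a\<close>
  is attained, at a rational point.

  An infinite run from \<open>w\<close> keeps the energy between \<open>L\<close> and \<open>U\<close> at the start of every
  iteration; the infimum \<open>a\<close> and supremum \<open>b\<close> of these energies satisfy \<open>R\<^sup>\<infinity>(a, b, U)\<close>,
  since the set of energies from which some run lands in \<open>[a; b]\<close> is again a projection of a
  polyhedron, hence closed. So \<open>a\<^sub>m\<^sub>i\<^sub>n \<le> a \<le> w\<close>. Conversely, \<open>R\<^sup>\<infinity>\<close> can be iterated
  forever from \<open>a\<^sub>m\<^sub>i\<^sub>n\<close>, and adding \<open>w - a\<^sub>m\<^sub>i\<^sub>n\<close> to all energy levels (and to \<open>U\<close>) gives an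
  infinite run from any \<open>w \<ge> a\<^sub>m\<^sub>i\<^sub>n\<close>.\<close>

section \<open>Systems of linear inequalities\<close>

text \<open>A linear inequality \<open>(c, k)\<close> over the finite set of variables \<open>V\<close> reads
  \<open>\<Sum>v\<in>V. c v * y v \<le> k\<close>; coefficients outside \<open>V\<close> are ignored.\<close>

type_synonym 'v lin_ineq = "('v \<Rightarrow> real) \<times> real"

definition lin_form :: "'v set \<Rightarrow> ('v \<Rightarrow> real) \<Rightarrow> ('v \<Rightarrow> real) \<Rightarrow> real" where
  "lin_form V c y = (\<Sum>v\<in>V. c v * y v)"

definition sat_ineq :: "'v set \<Rightarrow> 'v lin_ineq \<Rightarrow> ('v \<Rightarrow> real) \<Rightarrow> bool" where
  "sat_ineq V p y \<longleftrightarrow> lin_form V (fst p) y \<le> snd p"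

definition sat_system :: "'v set \<Rightarrow> 'v lin_ineq set \<Rightarrow> ('v \<Rightarrow> real) \<Rightarrow> bool" where
  "sat_system V cs y \<longleftrightarrow> (\<forall>p\<in>cs. sat_ineq V p y)"

definition rat_coeffs :: "'v lin_ineq \<Rightarrow> bool" where
  "rat_coeffs p \<longleftrightarrow> snd p \<in> \<rat> \<and> (\<forall>v. fst p v \<in> \<rat>)"

definition rat_system :: "'v lin_ineq set \<Rightarrow> bool" where
  "rat_system cs \<longleftrightarrow> (\<forall>p\<in>cs. rat_coeffs p)"

lemma lin_form_fun_upd:
  assumes "finite V" "z \<in> V"
  shows "lin_form V c (y(z:=t)) = lin_form V c y + c z * (t - y z)"
proof -
  have "lin_form V c (y(z:=t)) = c z * t + (\<Sum>v\<in>V-{z}. c v * y v)"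
    and "lin_form V c y = c z * y z + (\<Sum>v\<in>V-{z}. c v * y v)"
    unfolding lin_form_def using assms by (simp_all add: sum.remove)
  then show ?thesis by (simp add: algebra_simps)
qed

lemma lin_form_single:
  assumes "finite V" "z \<in> V" "\<forall>v\<in>V-{z}. c v = 0"
  shows "lin_form V c y = c z * y z"
  unfolding lin_form_def using assms by (simp add: sum.remove)

lemma lin_form_coeff_lincomb:
  "lin_form V (\<lambda>v. a * c1 v + b * c2 v) y = a * lin_form V c1 y + b * lin_form V c2 y"
  unfolding lin_form_def by (simp add: sum.distrib sum_distrib_left algebra_simps)

lemma lin_form_point_lincomb:
  "lin_form V c (\<lambda>v. a * y1 v + b * y2 v) = a * lin_form V c y1 + b * lin_form V c y2"
  unfolding lin_form_def by (simp add: sum.distrib sum_distrib_left algebra_simps)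

lemma sat_system_cong: "(\<And>v. v \<in> V \<Longrightarrow> y v = y' v) \<Longrightarrow> sat_system V cs y = sat_system V cs y'"
  unfolding sat_system_def sat_ineq_def lin_form_def by (metis (no_types, lifting) sum.cong)

lemma sat_system_Un: "sat_system V (A \<union> B) y \<longleftrightarrow> sat_system V A y \<and> sat_system V B y"
  unfolding sat_system_def by blast

lemma sat_system_insert: "sat_system V (insert p A) y \<longleftrightarrow> sat_ineq V p y \<and> sat_system V A y"
  unfolding sat_system_def by blast

lemma sat_system_empty: "sat_system V {} y"
  unfolding sat_system_def by blast

lemma sat_system_convex:
  assumes "sat_system V cs y1" "sat_system V cs y2" "0 \<le> a" "a \<le> 1"
  shows "sat_system V cs (\<lambda>v. a * y1 v + (1 - a) * y2 v)"
  unfolding sat_system_def sat_ineq_def lin_form_point_lincomb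
proof
  fix p assume "p \<in> cs"
  then have "lin_form V (fst p) y1 \<le> snd p" "lin_form V (fst p) y2 \<le> snd p"
    using assms(1,2) unfolding sat_system_def sat_ineq_def by auto
  then have "a * lin_form V (fst p) y1 + (1 - a) * lin_form V (fst p) y2 \<le> a * snd p + (1 - a) * snd p"
    using assms(3,4) by (intro add_mono mult_left_mono) auto
  then show "a * lin_form V (fst p) y1 + (1 - a) * lin_form V (fst p) y2 \<le> snd p"
    by (simp add: algebra_simps)
qed

subsection \<open>Fourier--Motzkin elimination\<close>

definition fm_combine :: "'v \<Rightarrow> 'v lin_ineq \<Rightarrow> 'v lin_ineq \<Rightarrow> 'v lin_ineq" where
  "fm_combine z p q = ((\<lambda>v. (- fst q z) * fst p v + fst p z * fst q v),
                       (- fst q z) * snd p + fst p z * snd q)"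

definition fm_elim :: "'v \<Rightarrow> 'v lin_ineq set \<Rightarrow> 'v lin_ineq set" where
  "fm_elim z cs = {p \<in> cs. fst p z = 0} \<union>
     (\<lambda>(p, q). fm_combine z p q) ` {(p, q). p \<in> cs \<and> q \<in> cs \<and> fst p z > 0 \<and> fst q z < 0}"

lemma finite_fm_elim: "finite cs \<Longrightarrow> finite (fm_elim z cs)"
proof -
  assume cs: "finite cs"
  have "finite {(p, q). p \<in> cs \<and> q \<in> cs \<and> fst p z > 0 \<and> fst q z < 0}"
    by (rule finite_subset[OF _ finite_cartesian_product[OF cs cs]]) auto
  with cs show ?thesis unfolding fm_elim_def by auto
qed

lemma rat_coeffs_fm_combine: "rat_coeffs p \<Longrightarrow> rat_coeffs q \<Longrightarrow> rat_coeffs (fm_combine z p q)"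
  unfolding rat_coeffs_def fm_combine_def by (auto intro!: Rats_add Rats_mult)

lemma rat_system_fm_elim: "rat_system cs \<Longrightarrow> rat_system (fm_elim z cs)"
  unfolding rat_system_def fm_elim_def using rat_coeffs_fm_combine by fastforce

lemma fm_elim_coeff_eliminated: "p \<in> fm_elim z cs \<Longrightarrow> fst p z = 0"
  unfolding fm_elim_def fm_combine_def by (auto simp: algebra_simps)

lemma fm_elim_coeff_zero:
  "\<forall>p\<in>cs. fst p w = 0 \<Longrightarrow> p \<in> fm_elim z cs \<Longrightarrow> fst p w = 0"
  unfolding fm_elim_def fm_combine_def by (auto; metis fst_conv mult_zero_right)

text \<open>The value of \<open>z\<close> at which the inequality \<open>p\<close> becomes tight, the other variables
  being fixed by \<open>x\<close>.\<close>

definition fm_bound :: "'v set \<Rightarrow> 'v \<Rightarrow> ('v \<Rightarrow> real) \<Rightarrow> 'v lin_ineq \<Rightarrow> real" where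
  "fm_bound V z x p = (snd p - lin_form V (fst p) x + fst p z * x z) / fst p z"

lemma sat_ineq_fun_upd_pos:
  assumes "finite V" "z \<in> V" "fst p z > 0"
  shows "sat_ineq V p (x(z:=t)) \<longleftrightarrow> t \<le> fm_bound V z x p"
  using assms unfolding sat_ineq_def fm_bound_def lin_form_fun_upd[OF assms(1,2)]
  by (simp add: le_divide_eq algebra_simps)

lemma sat_ineq_fun_upd_neg:
  assumes "finite V" "z \<in> V" "fst p z < 0"
  shows "sat_ineq V p (x(z:=t)) \<longleftrightarrow> fm_bound V z x p \<le> t"
  using assms unfolding sat_ineq_def fm_bound_def lin_form_fun_upd[OF assms(1,2)]
  by (simp add: divide_le_eq algebra_simps)

lemma sat_ineq_fun_upd_zero:
  assumes "finite V" "z \<in> V" "fst p z = 0"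
  shows "sat_ineq V p (x(z:=t)) \<longleftrightarrow> sat_ineq V p x"
  using assms unfolding sat_ineq_def lin_form_fun_upd[OF assms(1,2)] by simp

lemma sat_fm_combine_iff:
  assumes pq: "fst p z > 0" "fst q z < 0"
  shows "sat_ineq V (fm_combine z p q) x \<longleftrightarrow> fm_bound V z x q \<le> fm_bound V z x p"
proof -
  let ?P = "lin_form V (fst p) x - snd p" and ?Q = "lin_form V (fst q) x - snd q"
  have "sat_ineq V (fm_combine z p q) x \<longleftrightarrow> (- fst q z) * ?P + fst p z * ?Q \<le> 0"
    unfolding sat_ineq_def fm_combine_def fst_conv snd_conv lin_form_coeff_lincomb
    by (simp add: algebra_simps)
  also have "\<dots> \<longleftrightarrow> ?P / fst p z \<le> ?Q / fst q z"
    using pq by (simp add: field_simps)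
  also have "\<dots> \<longleftrightarrow> fm_bound V z x q \<le> fm_bound V z x p"
    using pq unfolding fm_bound_def by (simp add: field_simps)
  finally show ?thesis .
qed

lemma sat_fm_elim_if_sat_fun_upd:
  assumes V: "finite V" "z \<in> V" and t: "sat_system V cs (x(z:=t))"
  shows "sat_system V (fm_elim z cs) x"
  unfolding sat_system_def
proof
  fix p assume "p \<in> fm_elim z cs"
  then consider "p \<in> cs" "fst p z = 0"
    | p1 p2 where "p = fm_combine z p1 p2" "p1 \<in> cs" "p2 \<in> cs" "fst p1 z > 0" "fst p2 z < 0"
    unfolding fm_elim_def by auto
  then show "sat_ineq V p x"
  proof cases
    case 1
    then show ?thesis using t sat_ineq_fun_upd_zero[OF V] unfolding sat_system_def by blast
  next
    case 2
    then have "t \<le> fm_bound V z x p1" "fm_bound V z x p2 \<le> t"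
      using t sat_ineq_fun_upd_pos[OF V] sat_ineq_fun_upd_neg[OF V] unfolding sat_system_def
      by blast+
    then show ?thesis unfolding 2 sat_fm_combine_iff[OF 2(4,5)] by linarith
  qed
qed

text \<open>Conversely, every lower bound on \<open>z\<close> lies below every upper bound, so the largest lower
  bound is a feasible value.\<close>

lemma sat_fun_upd_if_sat_fm_elim:
  assumes V: "finite V" "z \<in> V" and "finite cs" and sat: "sat_system V (fm_elim z cs) x"
  shows "\<exists>t. sat_system V cs (x(z:=t))"
proof -
  define N where "N = {p \<in> cs. fst p z < 0}"
  define P where "P = {p \<in> cs. fst p z > 0}"
  have fin: "finite (fm_bound V z x ` N)" "finite (fm_bound V z x ` P)"
    using \<open>finite cs\<close> unfolding N_def P_def by auto
  have NP: "fm_bound V z x q \<le> fm_bound V z x p" if "p \<in> P" "q \<in> N" for p q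
  proof -
    have "sat_ineq V (fm_combine z p q) x"
      using sat that unfolding sat_system_def fm_elim_def P_def N_def by blast
    then show ?thesis using that unfolding P_def N_def by (simp add: sat_fm_combine_iff)
  qed
  define t where "t = (if N \<noteq> {} then Max (fm_bound V z x ` N)
                       else if P \<noteq> {} then Min (fm_bound V z x ` P) else x z)"
  have tP: "t \<le> fm_bound V z x p" if "p \<in> P" for p
  proof (cases "N = {}")
    case True
    then show ?thesis using that fin unfolding t_def by auto
  next
    case False
    then have "Max (fm_bound V z x ` N) \<in> fm_bound V z x ` N"
      using fin by (intro Max_in) auto
    then obtain q where "q \<in> N" "Max (fm_bound V z x ` N) = fm_bound V z x q" by auto
    then show ?thesis using NP[OF that] False unfolding t_def by simp
  qed
  have tN: "fm_bound V z x q \<le> t" if "q \<in> N" for q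
    using that fin unfolding t_def by auto
  have "sat_ineq V p (x(z:=t))" if "p \<in> cs" for p
  proof -
    consider "fst p z = 0" | "fst p z > 0" | "fst p z < 0" by linarith
    then show ?thesis
    proof cases
      case 1
      then have "p \<in> fm_elim z cs" using that unfolding fm_elim_def by auto
      then show ?thesis using sat 1 sat_ineq_fun_upd_zero[OF V] unfolding sat_system_def by blast
    next
      case 2
      then show ?thesis using that tP sat_ineq_fun_upd_pos[OF V] unfolding P_def by blast
    next
      case 3
      then show ?thesis using that tN sat_ineq_fun_upd_neg[OF V] unfolding N_def by blast
    qed
  qed
  then show ?thesis unfolding sat_system_def by blast
qed

theorem sat_fm_elim_iff:
  assumes "finite V" "z \<in> V" "finite cs"
  shows "sat_system V (fm_elim z cs) x \<longleftrightarrow> (\<exists>t. sat_system V cs (x(z:=t)))"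
proof
  assume "sat_system V (fm_elim z cs) x"
  then show "\<exists>t. sat_system V cs (x(z:=t))" by (rule sat_fun_upd_if_sat_fm_elim[OF assms])
next
  assume "\<exists>t. sat_system V cs (x(z:=t))"
  then show "sat_system V (fm_elim z cs) x" using sat_fm_elim_if_sat_fun_upd[OF assms(1,2)] by blast
qed

theorem fm_projection:
  assumes V: "finite V" and "finite cs" and W: "W \<subseteq> V"
  shows "\<exists>cs'. finite cs' \<and> (rat_system cs \<longrightarrow> rat_system cs') \<and> (\<forall>p\<in>cs'. \<forall>w\<in>W. fst p w = 0) \<and>
     (\<forall>x. sat_system V cs' x \<longleftrightarrow> (\<exists>y. (\<forall>v. v \<notin> W \<longrightarrow> y v = x v) \<and> sat_system V cs y))"
proof -
  have "finite W" using W V finite_subset by blast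
  then show ?thesis using W
  proof (induction W rule: finite_induct)
    case empty
    show ?case
      using \<open>finite cs\<close> by (intro exI[of _ cs]) (auto, metis ext)
  next
    case (insert w W)
    then obtain cs' where cs': "finite cs'" "rat_system cs \<longrightarrow> rat_system cs'"
      "\<forall>p\<in>cs'. \<forall>w\<in>W. fst p w = 0"
      "\<forall>x. sat_system V cs' x \<longleftrightarrow> (\<exists>y. (\<forall>v. v \<notin> W \<longrightarrow> y v = x v) \<and> sat_system V cs y)"
      by auto
    have w: "w \<in> V" using insert by auto
    show ?case
    proof (intro exI[of _ "fm_elim w cs'"] conjI allI)
      show "finite (fm_elim w cs')" using cs' finite_fm_elim by auto
      show "rat_system cs \<longrightarrow> rat_system (fm_elim w cs')" using cs' rat_system_fm_elim by auto
      show "\<forall>p\<in>fm_elim w cs'. \<forall>v\<in>insert w W. fst p v = 0"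
        using cs'(3) fm_elim_coeff_eliminated fm_elim_coeff_zero by fastforce
    next
      fix x
      have "sat_system V (fm_elim w cs') x \<longleftrightarrow> (\<exists>t. sat_system V cs' (x(w:=t)))"
        using sat_fm_elim_iff[OF V w cs'(1)] .
      also have "\<dots> \<longleftrightarrow> (\<exists>t y. (\<forall>v. v \<notin> W \<longrightarrow> y v = (x(w:=t)) v) \<and> sat_system V cs y)"
        using cs'(4) by blast
      also have "\<dots> \<longleftrightarrow> (\<exists>y. (\<forall>v. v \<notin> insert w W \<longrightarrow> y v = x v) \<and> sat_system V cs y)"
      proof
        assume "\<exists>t y. (\<forall>v. v \<notin> W \<longrightarrow> y v = (x(w:=t)) v) \<and> sat_system V cs y"
        then show "\<exists>y. (\<forall>v. v \<notin> insert w W \<longrightarrow> y v = x v) \<and> sat_system V cs y"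
          by (metis fun_upd_other insertI2 insertCI)
      next
        assume "\<exists>y. (\<forall>v. v \<notin> insert w W \<longrightarrow> y v = x v) \<and> sat_system V cs y"
        then obtain y where "\<forall>v. v \<notin> insert w W \<longrightarrow> y v = x v" "sat_system V cs y" by blast
        then show "\<exists>t y. (\<forall>v. v \<notin> W \<longrightarrow> y v = (x(w:=t)) v) \<and> sat_system V cs y"
          using insert.hyps(2) by (intro exI[of _ "y w"] exI[of _ y]) auto
      qed
      finally show "sat_system V (fm_elim w cs') x \<longleftrightarrow>
          (\<exists>y. (\<forall>v. v \<notin> insert w W \<longrightarrow> y v = x v) \<and> sat_system V cs y)" .
    qed
  qed
qed

definition sat_1d :: "(real \<times> real) set \<Rightarrow> real \<Rightarrow> bool" where
  "sat_1d S t \<longleftrightarrow> (\<forall>p\<in>S. fst p * t \<le> snd p)"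

lemma closed_sat_1d: "closed {t. sat_1d S t}"
proof -
  have "{t. sat_1d S t} = (\<Inter>p\<in>S. {t. fst p * t \<le> snd p})"
    unfolding sat_1d_def by auto
  then show ?thesis
    by (auto intro!: closed_Collect_le continuous_intros)
qed

lemma sat_1d_least_rat:
  assumes "finite S" and rat: "\<forall>p\<in>S. fst p \<in> \<rat> \<and> snd p \<in> \<rat>"
    and t0: "sat_1d S t0" and lb: "\<forall>t. sat_1d S t \<longrightarrow> lb \<le> t"
  shows "\<exists>q\<in>\<rat>. sat_1d S q \<and> (\<forall>t. sat_1d S t \<longrightarrow> q \<le> t)"
proof -
  define B where "B = (\<lambda>p. snd p / fst p) ` {p\<in>S. fst p < 0}"
  have "finite B" using \<open>finite S\<close> unfolding B_def by auto
  have B_lower: "b \<le> t" if "sat_1d S t" "b \<in> B" for t b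
    using that unfolding B_def sat_1d_def by (auto simp: divide_le_eq mult.commute)
  have "B \<noteq> {}"
  proof
    assume "B = {}"
    then have "\<forall>p\<in>S. fst p \<ge> 0" unfolding B_def by force
    have "sat_1d S (min t0 (lb - 1))" unfolding sat_1d_def
    proof
      fix p assume "p \<in> S"
      then have "fst p * min t0 (lb - 1) \<le> fst p * t0"
        using \<open>\<forall>p\<in>S. fst p \<ge> 0\<close> by (intro mult_left_mono) auto
      then show "fst p * min t0 (lb - 1) \<le> snd p" using t0 \<open>p \<in> S\<close> unfolding sat_1d_def by fastforce
    qed
    then show False using lb by fastforce
  qed
  define q where "q = Max B"
  have "q \<in> B" using \<open>finite B\<close> \<open>B \<noteq> {}\<close> unfolding q_def by auto
  then have "q \<in> \<rat>" "\<forall>t. sat_1d S t \<longrightarrow> q \<le> t"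
    using rat B_lower unfolding B_def by auto
  moreover have "sat_1d S q" unfolding sat_1d_def
  proof
    fix p assume p: "p \<in> S"
    consider "fst p < 0" | "fst p = 0" | "fst p > 0" by linarith
    then show "fst p * q \<le> snd p"
    proof cases
      case 1
      then have "snd p / fst p \<le> q" using p \<open>finite B\<close> unfolding q_def B_def by auto
      then show ?thesis using 1 by (simp add: divide_le_eq mult.commute)
    next
      case 3
      have "fst p * q \<le> fst p * t0"
        using \<open>\<forall>t. sat_1d S t \<longrightarrow> q \<le> t\<close> t0 3 by (simp add: mult_left_mono)
      then show ?thesis using t0 p unfolding sat_1d_def by fastforce
    qed (use t0 p in \<open>auto simp: sat_1d_def\<close>)
  qed
  ultimately show ?thesis by blast
qed

lemma sat_1d_rat:
  assumes "finite S" and rat: "\<forall>p\<in>S. fst p \<in> \<rat> \<and> snd p \<in> \<rat>" and t0: "sat_1d S t0"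
  shows "\<exists>q\<in>\<rat>. sat_1d S q"
proof (cases "\<forall>t. sat_1d S t \<longrightarrow> of_int \<lfloor>t0\<rfloor> - 1 \<le> t")
  case True
  then show ?thesis using sat_1d_least_rat[OF assms] by blast
next
  case False
  then obtain t where t: "sat_1d S t" "t < of_int \<lfloor>t0\<rfloor> - 1" by auto
  define q where "q = (of_int \<lfloor>t0\<rfloor> - 1 :: real)"
  have "t \<le> q" "q \<le> t0" using t unfolding q_def by linarith+
  have "sat_1d S q" unfolding sat_1d_def
  proof
    fix p assume p: "p \<in> S"
    show "fst p * q \<le> snd p"
    proof (cases "fst p \<ge> 0")
      case True
      then have "fst p * q \<le> fst p * t0" using \<open>q \<le> t0\<close> by (simp add: mult_left_mono)
      then show ?thesis using t0 p unfolding sat_1d_def by fastforce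
    next
      case False
      then have "fst p * q \<le> fst p * t" using \<open>t \<le> q\<close> by (simp add: mult_left_mono_neg)
      then show ?thesis using t(1) p unfolding sat_1d_def by fastforce
    qed
  qed
  moreover have "q \<in> \<rat>" unfolding q_def by simp
  ultimately show ?thesis by blast
qed

text \<open>The constraints on the single variable \<open>z\<close> when all other variables are fixed by \<open>x\<close>.\<close>

definition line_system :: "'v set \<Rightarrow> 'v \<Rightarrow> ('v \<Rightarrow> real) \<Rightarrow> 'v lin_ineq set \<Rightarrow> (real \<times> real) set" where
  "line_system V z x cs = (\<lambda>p. (fst p z, snd p - lin_form V (fst p) x + fst p z * x z)) ` cs"

lemma sat_1d_line_system:
  assumes "finite V" "z \<in> V"
  shows "sat_1d (line_system V z x cs) t \<longleftrightarrow> sat_system V cs (x(z:=t))"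
  unfolding sat_1d_def line_system_def sat_system_def sat_ineq_def lin_form_fun_upd[OF assms]
  by (auto simp: algebra_simps)

lemma rat_line_system:
  assumes "rat_system cs" "\<forall>v\<in>V. x v \<in> \<rat>" "z \<in> V"
  shows "\<forall>p\<in>line_system V z x cs. fst p \<in> \<rat> \<and> snd p \<in> \<rat>"
  using assms unfolding line_system_def rat_system_def rat_coeffs_def lin_form_def
  by (auto intro!: Rats_add Rats_diff Rats_mult Rats_sum)

lemma lin_form_insert_zero:
  "finite V \<Longrightarrow> c z = 0 \<Longrightarrow> lin_form (insert z V) c y = lin_form V c y"
  unfolding lin_form_def by (simp add: sum.insert_if)

theorem rational_solution:
  assumes "finite V" "finite cs" "rat_system cs" "sat_system V cs x"
  shows "\<exists>q. (\<forall>v\<in>V. q v \<in> \<rat>) \<and> sat_system V cs q"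
  using assms
proof (induction V arbitrary: cs x rule: finite_induct)
  case empty
  then show ?case by blast
next
  case (insert z V)
  let ?V = "insert z V" and ?cs = "fm_elim z cs"
  have V: "finite ?V" "z \<in> ?V" using insert.hyps by auto
  have elim: "sat_system ?V ?cs y \<longleftrightarrow> sat_system V ?cs y" for y
    unfolding sat_system_def sat_ineq_def
    by (simp add: lin_form_insert_zero[OF insert.hyps(1)] fm_elim_coeff_eliminated)
  have "sat_system ?V ?cs x"
    using sat_fm_elim_iff[OF V insert.prems(1), of x] insert.prems(3) by (metis fun_upd_triv)
  then have "sat_system V ?cs x" using elim by blast
  then obtain q where q: "\<forall>v\<in>V. q v \<in> \<rat>" "sat_system V ?cs q"
    using insert.IH[OF finite_fm_elim rat_system_fm_elim] insert.prems(1,2) by blast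
  define q' where "q' = q(z := 0)"
  have q': "\<forall>v\<in>?V. q' v \<in> \<rat>" using q(1) unfolding q'_def by auto
  have "sat_system V ?cs q'"
    using q(2) by (subst sat_system_cong[of V q' q]) (use insert.hyps(2) in \<open>auto simp: q'_def\<close>)
  then have "sat_system ?V ?cs q'" using elim by blast
  then obtain t0 where "sat_system ?V cs (q'(z := t0))"
    using sat_fm_elim_iff[OF V insert.prems(1)] by blast
  then have "sat_1d (line_system ?V z q' cs) t0" by (simp add: sat_1d_line_system[OF V])
  moreover have "finite (line_system ?V z q' cs)" using insert.prems(1) by (simp add: line_system_def)
  ultimately obtain t where "t \<in> \<rat>" "sat_1d (line_system ?V z q' cs) t"
    using sat_1d_rat rat_line_system[OF insert.prems(2) q' V(2)] by blast
  then have "t \<in> \<rat>" "sat_system ?V cs (q'(z := t))" by (simp_all add: sat_1d_line_system[OF V])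
  moreover have "\<forall>v\<in>?V. (q'(z := t)) v \<in> \<rat>" using q' \<open>t \<in> \<rat>\<close> by simp
  ultimately show ?case by blast
qed

theorem projection_1d:
  assumes V: "finite V" "z \<in> V" and "finite cs"
  shows "\<exists>S. finite S \<and> (rat_system cs \<longrightarrow> (\<forall>p\<in>S. fst p \<in> \<rat> \<and> snd p \<in> \<rat>)) \<and>
     (\<forall>t. sat_1d S t \<longleftrightarrow> (\<exists>y. y z = t \<and> sat_system V cs y))"
proof -
  obtain cs' where cs': "finite cs'" "rat_system cs \<longrightarrow> rat_system cs'"
    "\<forall>p\<in>cs'. \<forall>w\<in>V-{z}. fst p w = 0"
    "\<forall>x. sat_system V cs' x \<longleftrightarrow> (\<exists>y. (\<forall>v. v \<notin> V-{z} \<longrightarrow> y v = x v) \<and> sat_system V cs y)"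
    using fm_projection[OF V(1) \<open>finite cs\<close>, of "V-{z}"] by auto
  define S where "S = (\<lambda>p. (fst p z, snd p)) ` cs'"
  have "sat_1d S t \<longleftrightarrow> (\<exists>y. y z = t \<and> sat_system V cs y)" for t
  proof -
    have "sat_1d S t \<longleftrightarrow> sat_system V cs' (\<lambda>_. t)"
      unfolding sat_1d_def sat_system_def sat_ineq_def S_def using lin_form_single[OF V] cs'(3) by auto
    also have "\<dots> \<longleftrightarrow> (\<exists>y. y z = t \<and> sat_system V cs y)"
    proof
      assume "sat_system V cs' (\<lambda>_. t)"
      then show "\<exists>y. y z = t \<and> sat_system V cs y" using cs'(4) by auto
    next
      assume "\<exists>y. y z = t \<and> sat_system V cs y"
      then obtain y where y: "y z = t" "sat_system V cs y" by auto
      define y' where "y' = (\<lambda>v. if v \<in> V-{z} then y v else t)"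
      have "sat_system V cs y'" using y sat_system_cong[of V y' y cs] unfolding y'_def by auto
      moreover have "\<forall>v. v \<notin> V-{z} \<longrightarrow> y' v = t" unfolding y'_def by auto
      ultimately show "sat_system V cs' (\<lambda>_. t)" using cs'(4) by auto
    qed
    finally show ?thesis .
  qed
  moreover have "finite S" "rat_system cs \<longrightarrow> (\<forall>p\<in>S. fst p \<in> \<rat> \<and> snd p \<in> \<rat>)"
    using cs'(1,2) unfolding S_def rat_system_def rat_coeffs_def by auto
  ultimately show ?thesis by blast
qed

corollary closed_projection:
  assumes "finite V" "z \<in> V" "finite cs"
  shows "closed {t. \<exists>y. y z = t \<and> sat_system V cs y}"
proof -
  obtain S where "\<forall>t. sat_1d S t \<longleftrightarrow> (\<exists>y. y z = t \<and> sat_system V cs y)"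
    using projection_1d[OF assms] by blast
  then have "{t. \<exists>y. y z = t \<and> sat_system V cs y} = {t. sat_1d S t}" by blast
  then show ?thesis using closed_sat_1d by simp
qed

theorem rational_minimiser:
  assumes V: "finite V" "z \<in> V" and cs: "finite cs" "rat_system cs" and x: "sat_system V cs x"
    and lb: "\<forall>y. sat_system V cs y \<longrightarrow> lb \<le> y z"
  shows "\<exists>q. (\<forall>v\<in>V. q v \<in> \<rat>) \<and> sat_system V cs q \<and> (\<forall>y. sat_system V cs y \<longrightarrow> q z \<le> y z)"
proof -
  obtain S where S: "finite S" "\<forall>p\<in>S. fst p \<in> \<rat> \<and> snd p \<in> \<rat>"
    and proj: "\<And>t. sat_1d S t \<longleftrightarrow> (\<exists>y. y z = t \<and> sat_system V cs y)"
    using projection_1d[OF V cs(1)] cs(2) by blast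
  have "sat_1d S (x z)" "\<forall>t. sat_1d S t \<longrightarrow> lb \<le> t"
    using proj x lb by auto
  then obtain a where a: "a \<in> \<rat>" "sat_1d S a" "\<forall>t. sat_1d S t \<longrightarrow> a \<le> t"
    using sat_1d_least_rat[OF S] by blast
  text \<open>Pin the coordinate \<open>z\<close> to its least value \<open>a\<close> by the rational inequality \<open>y z \<le> a\<close>.\<close>
  define cs' where "cs' = insert (\<lambda>v. if v = z then 1 else 0, a) cs"
  have pin: "lin_form V (\<lambda>v. if v = z then 1 else 0) y = y z" for y
    using lin_form_single[OF V, of "\<lambda>v. if v = z then 1 else 0"] by simp
  obtain y0 where "y0 z = a" "sat_system V cs y0" using proj a(2) by blast
  then have "sat_system V cs' y0" unfolding cs'_def sat_system_def sat_ineq_def by (simp add: pin)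
  moreover have "rat_system cs'" "finite cs'"
    using cs a(1) unfolding cs'_def rat_system_def rat_coeffs_def by auto
  ultimately obtain q where q: "\<forall>v\<in>V. q v \<in> \<rat>" "sat_system V cs' q"
    using rational_solution[OF V(1)] by blast
  then have "sat_system V cs q" "q z \<le> a"
    unfolding cs'_def sat_system_insert by (simp_all add: sat_ineq_def pin)
  moreover have "a \<le> y z" if "sat_system V cs y" for y using a(3) proj that by blast
  ultimately have "\<forall>y. sat_system V cs y \<longrightarrow> q z \<le> y z" by fastforce
  with q(1) \<open>sat_system V cs q\<close> show ?thesis by blast
qed

section \<open>Runs of a cycle as solutions of linear systems\<close>

fun clock_val :: "'c etp \<Rightarrow> (nat \<Rightarrow> real) \<Rightarrow> nat \<Rightarrow> 'c \<Rightarrow> real" where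
  "clock_val C d 0 = (\<lambda>x. 0)"
| "clock_val C d (Suc i) = (\<lambda>x. if x \<in> reset C i then 0 else clock_val C d i x + d i)"

definition energy :: "'c etp \<Rightarrow> real \<Rightarrow> (nat \<Rightarrow> real) \<Rightarrow> nat \<Rightarrow> real" where
  "energy C w0 d i = w0 + (\<Sum>j<i. d j * real_of_rat (rate C j) + real_of_rat (upd C j))"

text \<open>Clock constraints are closed and convex, and energy is affine along a delay, so it
  suffices to check them at both ends of every delay.\<close>

definition delay_run :: "'c etp \<Rightarrow> real \<Rightarrow> real \<Rightarrow> real \<Rightarrow> real \<Rightarrow> (nat \<Rightarrow> real) \<Rightarrow> bool" where
  "delay_run C L U w0 w1 d \<longleftrightarrow>
     (\<forall>i<len C. 0 \<le> d i
        \<and> sat (inv C i) (clock_val C d i) \<and> sat (inv C i) (\<lambda>x. clock_val C d i x + d i)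
        \<and> L \<le> energy C w0 d i \<and> energy C w0 d i \<le> U
        \<and> L \<le> energy C w0 d i + d i * real_of_rat (rate C i)
        \<and> energy C w0 d i + d i * real_of_rat (rate C i) \<le> U
        \<and> sat (guard C i) (\<lambda>x. clock_val C d i x + d i))
     \<and> (\<forall>x. clock_val C d (len C) x = 0) \<and> sat (inv C (len C)) (\<lambda>x. 0)
     \<and> w1 = energy C w0 d (len C) \<and> L \<le> w1 \<and> w1 \<le> U"

lemma sat_delay_between:
  assumes "sat g v" "sat g (\<lambda>x. v x + d)" "0 \<le> t" "t \<le> d"
  shows "sat g (\<lambda>x. v x + t)"
  unfolding sat_def
proof
  fix a assume a: "a \<in> set g"
  show "sat_atom a (\<lambda>x. v x + t)"
  proof (cases a)
    case (CLe x k)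
    then have "v x + d \<le> real k" using assms(2) a unfolding sat_def by fastforce
    then show ?thesis using CLe assms by simp
  next
    case (CGe x k)
    then have "real k \<le> v x" using assms(1) a unfolding sat_def by fastforce
    then show ?thesis using CGe assms by simp
  qed
qed

lemma delay_run_if_R:
  assumes "R C L w0 w1 U"
  shows "\<exists>d. delay_run C (of_rat L) (of_rat U) w0 w1 d"
proof -
  obtain d v e where start: "v 0 = zero_val" "e 0 = w0" and finish: "v (len C) = zero_val" "e (len C) = w1"
    and step: "\<forall>i < len C.
           0 \<le> d i \<and>
           (\<forall>t. 0 \<le> t \<and> t \<le> d i \<longrightarrow>
                 sat (inv C i) (\<lambda>x. v i x + t) \<and>
                 real_of_rat L \<le> e i + t * real_of_rat (rate C i) \<and>
                 e i + t * real_of_rat (rate C i) \<le> real_of_rat U) \<and>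
           sat (guard C i) (\<lambda>x. v i x + d i) \<and>
           v (Suc i) = (\<lambda>x. if x \<in> reset C i then 0 else v i x + d i) \<and>
           e (Suc i) = e i + d i * real_of_rat (rate C i) + real_of_rat (upd C i)"
    and last: "sat (inv C (len C)) zero_val" "real_of_rat L \<le> w1" "w1 \<le> real_of_rat U"
    using assms unfolding R_def etp_run_def by blast
  have v: "v i = clock_val C d i" if "i \<le> len C" for i
    using that by (induction i) (use start step in \<open>auto simp: zero_val_def\<close>)
  have e: "e i = energy C w0 d i" if "i \<le> len C" for i
    using that by (induction i) (use start step in \<open>auto simp: energy_def\<close>)
  have "delay_run C (of_rat L) (of_rat U) w0 w1 d"
    unfolding delay_run_def
  proof (intro conjI allI impI)
    fix i assume i: "i < len C"
    have d: "0 \<le> d i" using step i by blast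
    have ends: "sat (inv C i) (\<lambda>x. v i x + t) \<and> real_of_rat L \<le> e i + t * real_of_rat (rate C i) \<and>
                 e i + t * real_of_rat (rate C i) \<le> real_of_rat U" if "t = 0 \<or> t = d i" for t
      using step i that d by blast
    show "0 \<le> d i" by (rule d)
    show "sat (guard C i) (\<lambda>x. clock_val C d i x + d i)" using step i v[of i] by auto
    show "sat (inv C i) (clock_val C d i)" "sat (inv C i) (\<lambda>x. clock_val C d i x + d i)"
      "real_of_rat L \<le> energy C w0 d i" "energy C w0 d i \<le> real_of_rat U"
      "real_of_rat L \<le> energy C w0 d i + d i * real_of_rat (rate C i)"
      "energy C w0 d i + d i * real_of_rat (rate C i) \<le> real_of_rat U"
      using ends[of 0] ends[of "d i"] v[of i] e[of i] i by (simp_all add: fun_eq_iff)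
  qed (use v[of "len C"] e[of "len C"] start finish last in \<open>auto simp: zero_val_def fun_eq_iff\<close>)
  then show ?thesis by blast
qed

lemma R_if_delay_run:
  assumes run: "delay_run C (of_rat L) (of_rat U) w0 w1 d"
  shows "R C L w0 w1 U"
proof -
  have step: "\<forall>i < len C.
           0 \<le> d i \<and>
           (\<forall>t. 0 \<le> t \<and> t \<le> d i \<longrightarrow>
                 sat (inv C i) (\<lambda>x. clock_val C d i x + t) \<and>
                 real_of_rat L \<le> energy C w0 d i + t * real_of_rat (rate C i) \<and>
                 energy C w0 d i + t * real_of_rat (rate C i) \<le> real_of_rat U) \<and>
           sat (guard C i) (\<lambda>x. clock_val C d i x + d i) \<and>
           clock_val C d (Suc i) = (\<lambda>x. if x \<in> reset C i then 0 else clock_val C d i x + d i) \<and>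
           energy C w0 d (Suc i) = energy C w0 d i + d i * real_of_rat (rate C i) + real_of_rat (upd C i)"
  proof (intro allI impI conjI)
    fix i t assume i: "i < len C" and t: "0 \<le> t \<and> t \<le> d i"
    let ?r = "real_of_rat (rate C i)"
    have ends: "sat (inv C i) (clock_val C d i)" "sat (inv C i) (\<lambda>x. clock_val C d i x + d i)"
      "real_of_rat L \<le> energy C w0 d i" "energy C w0 d i \<le> real_of_rat U"
      "real_of_rat L \<le> energy C w0 d i + d i * ?r" "energy C w0 d i + d i * ?r \<le> real_of_rat U"
      using run i unfolding delay_run_def by blast+
    show "sat (inv C i) (\<lambda>x. clock_val C d i x + t)"
      using sat_delay_between[of "inv C i" "clock_val C d i" "d i" t] ends t by simp
    have "min 0 (d i * ?r) \<le> t * ?r \<and> t * ?r \<le> max 0 (d i * ?r)"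
    proof (cases "?r \<ge> 0")
      case True
      then have "0 \<le> t * ?r" "t * ?r \<le> d i * ?r" using t by (auto intro: mult_right_mono)
      then show ?thesis by auto
    next
      case False
      then have "t * ?r \<le> 0" "d i * ?r \<le> t * ?r"
        using t by (auto intro: mult_right_mono_neg mult_nonneg_nonpos)
      then show ?thesis by auto
    qed
    then show "real_of_rat L \<le> energy C w0 d i + t * ?r" "energy C w0 d i + t * ?r \<le> real_of_rat U"
      using ends by linarith+
  qed (use run in \<open>auto simp: delay_run_def energy_def\<close>)
  then show ?thesis
    unfolding R_def etp_run_def
    using run unfolding delay_run_def
    by (intro exI[of _ d] exI[of _ "clock_val C d"] exI[of _ "energy C w0 d"])
      (auto simp: zero_val_def energy_def fun_eq_iff)
qed

lemma R_iff_delay_run: "R C L w0 w1 U \<longleftrightarrow> (\<exists>d. delay_run C (of_rat L) (of_rat U) w0 w1 d)"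
  using delay_run_if_R R_if_delay_run by blast

lemma R_shift:
  assumes "R C L w0 w1 U" "0 \<le> s" "of_rat U + s \<le> of_rat U'"
  shows "R C L (w0 + s) (w1 + s) U'"
proof -
  obtain d where d: "delay_run C (of_rat L) (of_rat U) w0 w1 d"
    using assms(1) R_iff_delay_run by blast
  have "energy C (w0 + s) d i = energy C w0 d i + s" for i by (simp add: energy_def)
  then have "delay_run C (of_rat L) (of_rat U') (w0 + s) (w1 + s) d"
    using d assms(2,3) unfolding delay_run_def by (auto; smt (verit))
  then show ?thesis using R_iff_delay_run by blast
qed

lemma R_bounds:
  assumes "is_cycle C" "R C L w0 w1 U"
  shows "of_rat L \<le> w0 \<and> w0 \<le> of_rat U"
proof -
  obtain d where "delay_run C (of_rat L) (of_rat U) w0 w1 d"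
    using assms(2) R_iff_delay_run by blast
  moreover have "0 < len C" using assms(1) unfolding is_cycle_def by simp
  ultimately show ?thesis unfolding delay_run_def by (force simp: energy_def)
qed

type_synonym 'v aff = "('v \<Rightarrow> real) \<times> real"

definition aff_val :: "'v set \<Rightarrow> 'v aff \<Rightarrow> ('v \<Rightarrow> real) \<Rightarrow> real" where
  "aff_val V a y = lin_form V (fst a) y + snd a"

definition aff_var :: "'v \<Rightarrow> 'v aff" where
  "aff_var u = (\<lambda>v. if v = u then 1 else 0, 0)"

definition aff_const :: "real \<Rightarrow> 'v aff" where
  "aff_const k = (\<lambda>_. 0, k)"

definition aff_add :: "'v aff \<Rightarrow> 'v aff \<Rightarrow> 'v aff" where
  "aff_add a b = (\<lambda>v. fst a v + fst b v, snd a + snd b)"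

definition aff_scale :: "real \<Rightarrow> 'v aff \<Rightarrow> 'v aff" where
  "aff_scale s a = (\<lambda>v. s * fst a v, s * snd a)"

definition aff_sum :: "'i set \<Rightarrow> ('i \<Rightarrow> 'v aff) \<Rightarrow> 'v aff" where
  "aff_sum I f = (\<lambda>v. \<Sum>i\<in>I. fst (f i) v, \<Sum>i\<in>I. snd (f i))"

definition aff_le :: "'v aff \<Rightarrow> 'v aff \<Rightarrow> 'v lin_ineq" where
  "aff_le a b = (\<lambda>v. fst a v - fst b v, snd b - snd a)"

lemma aff_val_var: "finite V \<Longrightarrow> u \<in> V \<Longrightarrow> aff_val V (aff_var u) y = y u"
  unfolding aff_val_def aff_var_def using lin_form_single[of V u "\<lambda>v. if v = u then 1 else 0"] by simp

lemma aff_val_const: "aff_val V (aff_const k) y = k"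
  unfolding aff_val_def aff_const_def lin_form_def by simp

lemma aff_val_add: "aff_val V (aff_add a b) y = aff_val V a y + aff_val V b y"
  unfolding aff_val_def aff_add_def lin_form_def by (simp add: sum.distrib algebra_simps)

lemma aff_val_scale: "aff_val V (aff_scale s a) y = s * aff_val V a y"
  unfolding aff_val_def aff_scale_def lin_form_def by (simp add: sum_distrib_left algebra_simps)

lemma aff_val_sum: "aff_val V (aff_sum I f) y = (\<Sum>i\<in>I. aff_val V (f i) y)"
  unfolding aff_val_def aff_sum_def lin_form_def
  by (simp add: sum.distrib sum_distrib_right sum.swap[of _ V I])

lemma sat_aff_le: "sat_ineq V (aff_le a b) y \<longleftrightarrow> aff_val V a y \<le> aff_val V b y"
  unfolding sat_ineq_def aff_le_def aff_val_def lin_form_def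
  by (simp add: left_diff_distrib sum_subtractf) arith

lemma rat_coeffs_aff_var: "rat_coeffs (aff_var u)"
  unfolding rat_coeffs_def aff_var_def by auto

lemma rat_coeffs_aff_const: "k \<in> \<rat> \<Longrightarrow> rat_coeffs (aff_const k)"
  unfolding rat_coeffs_def aff_const_def by auto

lemma rat_coeffs_aff_add: "rat_coeffs a \<Longrightarrow> rat_coeffs b \<Longrightarrow> rat_coeffs (aff_add a b)"
  unfolding rat_coeffs_def aff_add_def by auto

lemma rat_coeffs_aff_scale: "s \<in> \<rat> \<Longrightarrow> rat_coeffs a \<Longrightarrow> rat_coeffs (aff_scale s a)"
  unfolding rat_coeffs_def aff_scale_def by auto

lemma rat_coeffs_aff_sum: "(\<And>i. i \<in> I \<Longrightarrow> rat_coeffs (f i)) \<Longrightarrow> rat_coeffs (aff_sum I f)"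
  unfolding rat_coeffs_def aff_sum_def by (auto intro!: Rats_sum)

lemma rat_coeffs_aff_le: "rat_coeffs a \<Longrightarrow> rat_coeffs b \<Longrightarrow> rat_coeffs (aff_le a b)"
  unfolding rat_coeffs_def aff_le_def by auto

lemmas rat_coeffs_aff_intros = rat_coeffs_aff_var rat_coeffs_aff_const rat_coeffs_aff_add
  rat_coeffs_aff_scale rat_coeffs_aff_sum rat_coeffs_aff_le

text \<open>Clock \<open>x\<close> is \<open>clock_coeff C i x j\<close> times the delay \<open>d j\<close> at state \<open>i\<close>: it
  accumulates the delays since its last reset.\<close>

definition clock_coeff :: "'c etp \<Rightarrow> nat \<Rightarrow> 'c \<Rightarrow> nat \<Rightarrow> real" where
  "clock_coeff C i x j = (if \<forall>l. j \<le> l \<and> l < i \<longrightarrow> x \<notin> reset C l then 1 else 0)"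

lemma clock_val_eq_sum: "clock_val C d i x = (\<Sum>j<i. clock_coeff C i x j * d j)"
proof (induction i)
  case 0
  then show ?case by simp
next
  case (Suc i)
  show ?case
  proof (cases "x \<in> reset C i")
    case True
    then have "clock_coeff C (Suc i) x j = 0" if "j < Suc i" for j
      using that unfolding clock_coeff_def by (metis lessI less_Suc_eq_le)
    then show ?thesis using True by simp
  next
    case False
    then have "clock_coeff C (Suc i) x j = clock_coeff C i x j" if "j < i" for j
      using that unfolding clock_coeff_def by (auto simp: less_Suc_eq)
    moreover have "clock_coeff C (Suc i) x i = 1"
      using False unfolding clock_coeff_def by (auto simp: less_Suc_eq)
    ultimately show ?thesis using False Suc by simp
  qed
qed

definition clock_aff :: "'c etp \<Rightarrow> (nat \<Rightarrow> 'v) \<Rightarrow> nat \<Rightarrow> 'c \<Rightarrow> 'v aff" where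
  "clock_aff C dv i x = aff_sum {..<i} (\<lambda>j. aff_scale (clock_coeff C i x j) (aff_var (dv j)))"

definition clock_aff_delayed :: "'c etp \<Rightarrow> (nat \<Rightarrow> 'v) \<Rightarrow> nat \<Rightarrow> 'c \<Rightarrow> 'v aff" where
  "clock_aff_delayed C dv i x = aff_add (clock_aff C dv i x) (aff_var (dv i))"

definition energy_aff :: "'c etp \<Rightarrow> 'v \<Rightarrow> (nat \<Rightarrow> 'v) \<Rightarrow> nat \<Rightarrow> 'v aff" where
  "energy_aff C w0v dv i = aff_add (aff_var w0v)
     (aff_sum {..<i} (\<lambda>j. aff_add (aff_scale (of_rat (rate C j)) (aff_var (dv j))) (aff_const (of_rat (upd C j)))))"

definition energy_aff_delayed :: "'c etp \<Rightarrow> 'v \<Rightarrow> (nat \<Rightarrow> 'v) \<Rightarrow> nat \<Rightarrow> 'v aff" where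
  "energy_aff_delayed C w0v dv i = aff_add (energy_aff C w0v dv i) (aff_scale (of_rat (rate C i)) (aff_var (dv i)))"

lemma aff_val_clock_aff:
  assumes "finite V" "i \<le> len C" "\<forall>j<len C. dv j \<in> V"
  shows "aff_val V (clock_aff C dv i x) y = clock_val C (\<lambda>j. y (dv j)) i x"
  unfolding clock_aff_def aff_val_sum aff_val_scale clock_val_eq_sum
  using assms by (intro sum.cong) (auto simp: aff_val_var)

lemma aff_val_clock_aff_delayed:
  assumes "finite V" "i < len C" "\<forall>j<len C. dv j \<in> V"
  shows "aff_val V (clock_aff_delayed C dv i x) y = clock_val C (\<lambda>j. y (dv j)) i x + y (dv i)"
  unfolding clock_aff_delayed_def aff_val_add using assms aff_val_clock_aff[of V i C dv x y]
  by (simp add: aff_val_var)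

lemma aff_val_energy_aff:
  assumes "finite V" "i \<le> len C" "\<forall>j<len C. dv j \<in> V" "w0v \<in> V"
  shows "aff_val V (energy_aff C w0v dv i) y = energy C (y w0v) (\<lambda>j. y (dv j)) i"
  unfolding energy_aff_def energy_def aff_val_add aff_val_sum using assms
  by (auto simp: aff_val_var aff_val_scale aff_val_const aff_val_add mult.commute intro!: sum.cong)

lemma aff_val_energy_aff_delayed:
  assumes "finite V" "i < len C" "\<forall>j<len C. dv j \<in> V" "w0v \<in> V"
  shows "aff_val V (energy_aff_delayed C w0v dv i) y =
    energy C (y w0v) (\<lambda>j. y (dv j)) i + y (dv i) * real_of_rat (rate C i)"
  unfolding energy_aff_delayed_def aff_val_add aff_val_scale using assms aff_val_energy_aff[of V i C dv w0v y]
  by (simp add: aff_val_var mult.commute)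

fun atom_ineq :: "'c atom \<Rightarrow> ('c \<Rightarrow> 'v aff) \<Rightarrow> 'v lin_ineq" where
  "atom_ineq (CLe x k) X = aff_le (X x) (aff_const (real k))"
| "atom_ineq (CGe x k) X = aff_le (aff_const (real k)) (X x)"

lemma sat_atom_ineqs: "(\<forall>a\<in>set g. sat_ineq V (atom_ineq a X) y) \<longleftrightarrow> sat g (\<lambda>x. aff_val V (X x) y)"
proof -
  have "sat_ineq V (atom_ineq a X) y \<longleftrightarrow> sat_atom a (\<lambda>x. aff_val V (X x) y)" for a
    by (cases a) (auto simp: sat_aff_le aff_val_const)
  then show ?thesis unfolding sat_def by auto
qed

lemma rat_coeffs_atom_ineq: "(\<And>x. rat_coeffs (X x)) \<Longrightarrow> rat_coeffs (atom_ineq a X)"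
  by (cases a) (auto intro!: rat_coeffs_aff_intros)

definition run_system ::
    "'c::finite etp \<Rightarrow> rat \<Rightarrow> 'v \<Rightarrow> 'v \<Rightarrow> 'v \<Rightarrow> (nat \<Rightarrow> 'v) \<Rightarrow> 'v lin_ineq set" where
  "run_system C L w0v w1v Uv dv =
    (\<Union>i\<in>{..<len C}.
       {aff_le (aff_const 0) (aff_var (dv i)),
        aff_le (aff_const (of_rat L)) (energy_aff C w0v dv i), aff_le (energy_aff C w0v dv i) (aff_var Uv),
        aff_le (aff_const (of_rat L)) (energy_aff_delayed C w0v dv i),
        aff_le (energy_aff_delayed C w0v dv i) (aff_var Uv)}
       \<union> (\<lambda>a. atom_ineq a (clock_aff C dv i)) ` set (inv C i)
       \<union> (\<lambda>a. atom_ineq a (clock_aff_delayed C dv i)) ` set (inv C i)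
       \<union> (\<lambda>a. atom_ineq a (clock_aff_delayed C dv i)) ` set (guard C i))
    \<union> (\<Union>x. {aff_le (clock_aff C dv (len C) x) (aff_const 0), aff_le (aff_const 0) (clock_aff C dv (len C) x)})
    \<union> (\<lambda>a. atom_ineq a (\<lambda>x. aff_const 0)) ` set (inv C (len C))
    \<union> {aff_le (aff_var w1v) (energy_aff C w0v dv (len C)), aff_le (energy_aff C w0v dv (len C)) (aff_var w1v),
       aff_le (aff_const (of_rat L)) (aff_var w1v), aff_le (aff_var w1v) (aff_var Uv)}"

lemma finite_run_system: "finite (run_system C L w0v w1v Uv dv)"
  unfolding run_system_def by auto

lemma rat_system_run_system: "rat_system (run_system C L w0v w1v Uv dv)"
  unfolding run_system_def rat_system_def clock_aff_def clock_aff_delayed_def energy_aff_delayed_def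
    energy_aff_def clock_coeff_def
  by (auto intro!: rat_coeffs_aff_intros rat_coeffs_atom_ineq)

lemma sat_run_system_iff:
  assumes "finite V" "w0v \<in> V" "w1v \<in> V" "Uv \<in> V" "\<forall>i<len C. dv i \<in> V"
  shows "sat_system V (run_system C L w0v w1v Uv dv) y \<longleftrightarrow>
    delay_run C (of_rat L) (y Uv) (y w0v) (y w1v) (\<lambda>i. y (dv i))"
  unfolding sat_system_def run_system_def delay_run_def
  using assms
  apply (simp add: ball_Un sat_aff_le sat_atom_ineqs aff_val_clock_aff aff_val_clock_aff_delayed
      aff_val_energy_aff aff_val_energy_aff_delayed aff_val_var aff_val_const)
  apply (simp only: lessThan_iff order.eq_iff[of "y w1v"] order.eq_iff[of "clock_val C _ (len C) _" 0])
  by blast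

section \<open>Iterating the cycle\<close>

text \<open>Variables of the system describing \<open>R\<^sup>\<infinity>(a, b, U)\<close>: the endpoints \<open>a\<close> and \<open>b\<close>, the bound
  \<open>U\<close>, and for a run from each endpoint its final energy and its delays.\<close>

datatype rinf_var = Lo | Hi | Up | Lo_next | Hi_next | Lo_delay nat | Hi_delay nat

definition rinf_vars :: "'c etp \<Rightarrow> rinf_var set" where
  "rinf_vars C = {Lo, Hi, Up, Lo_next, Hi_next} \<union> Lo_delay ` {..<len C} \<union> Hi_delay ` {..<len C}"

lemma rinf_vars_facts: "finite (rinf_vars C)" "Lo \<in> rinf_vars C" "Hi \<in> rinf_vars C" "Up \<in> rinf_vars C"
  "Lo_next \<in> rinf_vars C" "Hi_next \<in> rinf_vars C"
  "\<forall>i<len C. Lo_delay i \<in> rinf_vars C" "\<forall>i<len C. Hi_delay i \<in> rinf_vars C"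
  unfolding rinf_vars_def by auto

lemma R_iff_solution:
  fixes C :: "'c::finite etp"
  shows "R C L w0 w1 U \<longleftrightarrow> (\<exists>y. y Lo = w0 \<and> y Lo_next = w1 \<and> y Up = of_rat U \<and>
    sat_system (rinf_vars C) (run_system C L Lo Lo_next Up Lo_delay) y)"
  (is "_ \<longleftrightarrow> (\<exists>y. ?sol y)")
proof
  assume "R C L w0 w1 U"
  then obtain d where "delay_run C (of_rat L) (of_rat U) w0 w1 d" using R_iff_delay_run by blast
  moreover define y where
    "y = (\<lambda>v. case v of Lo \<Rightarrow> w0 | Lo_next \<Rightarrow> w1 | Up \<Rightarrow> of_rat U | Lo_delay i \<Rightarrow> d i | _ \<Rightarrow> 0)"
  ultimately have "?sol y"
    using sat_run_system_iff[OF rinf_vars_facts(1,2,5,4,7), of C L y] by (simp add: y_def)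
  then show "\<exists>y. ?sol y" by blast
qed (use sat_run_system_iff[OF rinf_vars_facts(1,2,5,4,7)] R_iff_delay_run in metis)

lemma R_convex:
  fixes C :: "'c::finite etp"
  assumes "R C L x1 s1 U" "R C L x2 s2 U" "0 \<le> a" "a \<le> 1"
  shows "R C L (a * x1 + (1 - a) * x2) (a * s1 + (1 - a) * s2) U"
proof -
  let ?V = "rinf_vars C" and ?cs = "run_system C L Lo Lo_next Up Lo_delay"
  obtain y1 y2 where y: "y1 Lo = x1" "y1 Lo_next = s1" "y1 Up = of_rat U" "sat_system ?V ?cs y1"
    "y2 Lo = x2" "y2 Lo_next = s2" "y2 Up = of_rat U" "sat_system ?V ?cs y2"
    using assms(1,2) R_iff_solution by metis
  have "sat_system ?V ?cs (\<lambda>v. a * y1 v + (1 - a) * y2 v)"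
    using sat_system_convex[OF y(4,8) assms(3,4)] .
  moreover have "a * y1 Up + (1 - a) * y2 Up = of_rat U" using y by (simp add: algebra_simps)
  ultimately show ?thesis using y R_iff_solution[of C L] by auto
qed

definition Rinf_real :: "'c etp \<Rightarrow> rat \<Rightarrow> real \<Rightarrow> real \<Rightarrow> rat \<Rightarrow> bool" where
  "Rinf_real C L a b U \<longleftrightarrow> of_rat L \<le> a \<and> a \<le> b \<and> b \<le> of_rat U \<and>
     (\<forall>w0. a \<le> w0 \<and> w0 \<le> b \<longrightarrow> (\<exists>w1. a \<le> w1 \<and> w1 \<le> b \<and> R C L w0 w1 U))"

lemma Rinf_iff_Rinf_real: "Rinf C L a b U \<longleftrightarrow> Rinf_real C L (of_rat a) (of_rat b) U"
  unfolding Rinf_def Rinf_real_def by (simp add: of_rat_less_eq)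

text \<open>By convexity of \<open>R\<close>, runs back into \<open>[a; b]\<close> from the two endpoints suffice.\<close>

lemma Rinf_real_iff_endpoints:
  fixes C :: "'c::finite etp"
  shows "Rinf_real C L a b U \<longleftrightarrow> of_rat L \<le> a \<and> a \<le> b \<and> b \<le> of_rat U \<and>
    (\<exists>s. a \<le> s \<and> s \<le> b \<and> R C L a s U) \<and> (\<exists>s. a \<le> s \<and> s \<le> b \<and> R C L b s U)"
proof
  assume "Rinf_real C L a b U"
  then show "of_rat L \<le> a \<and> a \<le> b \<and> b \<le> of_rat U \<and>
    (\<exists>s. a \<le> s \<and> s \<le> b \<and> R C L a s U) \<and> (\<exists>s. a \<le> s \<and> s \<le> b \<and> R C L b s U)"
    unfolding Rinf_real_def by auto
next
  assume "of_rat L \<le> a \<and> a \<le> b \<and> b \<le> of_rat U \<and>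
    (\<exists>s. a \<le> s \<and> s \<le> b \<and> R C L a s U) \<and> (\<exists>s. a \<le> s \<and> s \<le> b \<and> R C L b s U)"
  then obtain sa sb where ab: "of_rat L \<le> a" "a \<le> b" "b \<le> of_rat U"
    and sa: "a \<le> sa" "sa \<le> b" "R C L a sa U" and sb: "a \<le> sb" "sb \<le> b" "R C L b sb U"
    by blast
  have "\<exists>w1. a \<le> w1 \<and> w1 \<le> b \<and> R C L w0 w1 U" if w0: "a \<le> w0" "w0 \<le> b" for w0
  proof (cases "a = b")
    case True
    then show ?thesis using sa w0 by force
  next
    case False
    define l where "l = (b - w0) / (b - a)"
    have "a < b" using ab(2) False by simp
    then have l: "0 \<le> l" "l \<le> 1" "l * (b - a) = b - w0"
      using w0 unfolding l_def by (auto simp: field_simps)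
    then have "l * a + (1 - l) * b = w0" by (simp add: algebra_simps)
    have "R C L (l * a + (1 - l) * b) (l * sa + (1 - l) * sb) U"
      using R_convex[OF sa(3) sb(3) l(1,2)] .
    moreover have "l * a + (1 - l) * a \<le> l * sa + (1 - l) * sb"
      using sa sb l by (intro add_mono mult_left_mono) auto
    moreover have "l * sa + (1 - l) * sb \<le> l * b + (1 - l) * b"
      using sa sb l by (intro add_mono mult_left_mono) auto
    moreover have "l * a + (1 - l) * a = a" "l * b + (1 - l) * b = b" by (simp_all add: algebra_simps)
    ultimately show ?thesis using \<open>l * a + (1 - l) * b = w0\<close> by (metis order_trans)
  qed
  then show "Rinf_real C L a b U" unfolding Rinf_real_def using ab by blast
qed

definition rinf_system :: "'c::finite etp \<Rightarrow> rat \<Rightarrow> rinf_var lin_ineq set" where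
  "rinf_system C L = run_system C L Lo Lo_next Up Lo_delay \<union> run_system C L Hi Hi_next Up Hi_delay \<union>
     {aff_le (aff_const (of_rat L)) (aff_var Lo), aff_le (aff_var Lo) (aff_var Hi),
      aff_le (aff_var Hi) (aff_var Up),
      aff_le (aff_var Lo) (aff_var Lo_next), aff_le (aff_var Lo_next) (aff_var Hi),
      aff_le (aff_var Lo) (aff_var Hi_next), aff_le (aff_var Hi_next) (aff_var Hi)}"

lemma finite_rinf_system: "finite (rinf_system C L)"
  unfolding rinf_system_def using finite_run_system by auto

lemma rat_system_rinf_system: "rat_system (rinf_system C L)"
  using rat_system_run_system[of C L Lo Lo_next Up Lo_delay] rat_system_run_system[of C L Hi Hi_next Up Hi_delay]
  unfolding rinf_system_def rat_system_def by (auto intro!: rat_coeffs_aff_intros)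

lemma sat_rinf_system_iff:
  fixes C :: "'c::finite etp"
  shows "sat_system (rinf_vars C) (rinf_system C L) y \<longleftrightarrow>
    delay_run C (of_rat L) (y Up) (y Lo) (y Lo_next) (\<lambda>i. y (Lo_delay i)) \<and>
    delay_run C (of_rat L) (y Up) (y Hi) (y Hi_next) (\<lambda>i. y (Hi_delay i)) \<and>
    of_rat L \<le> y Lo \<and> y Lo \<le> y Hi \<and> y Hi \<le> y Up \<and> y Lo \<le> y Lo_next \<and> y Lo_next \<le> y Hi \<and>
    y Lo \<le> y Hi_next \<and> y Hi_next \<le> y Hi"
  unfolding rinf_system_def sat_system_Un
    sat_run_system_iff[OF rinf_vars_facts(1,2,5,4,7)] sat_run_system_iff[OF rinf_vars_facts(1,3,6,4,8)]
  by (simp add: sat_system_insert sat_system_empty sat_aff_le aff_val_var aff_val_const rinf_vars_facts)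

lemma Rinf_real_iff_solution:
  fixes C :: "'c::finite etp"
  shows "Rinf_real C L a b U \<longleftrightarrow>
    (\<exists>y. y Lo = a \<and> y Hi = b \<and> y Up = of_rat U \<and> sat_system (rinf_vars C) (rinf_system C L) y)"
proof
  assume "Rinf_real C L a b U"
  then obtain s1 s2 d1 d2 where "of_rat L \<le> a" "a \<le> b" "b \<le> of_rat U"
    "a \<le> s1" "s1 \<le> b" "a \<le> s2" "s2 \<le> b"
    "delay_run C (of_rat L) (of_rat U) a s1 d1" "delay_run C (of_rat L) (of_rat U) b s2 d2"
    unfolding Rinf_real_iff_endpoints R_iff_delay_run by blast
  moreover define y where "y = (\<lambda>v. case v of Lo \<Rightarrow> a | Hi \<Rightarrow> b | Up \<Rightarrow> of_rat U | Lo_next \<Rightarrow> s1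
    | Hi_next \<Rightarrow> s2 | Lo_delay i \<Rightarrow> d1 i | Hi_delay i \<Rightarrow> d2 i)"
  ultimately have "sat_system (rinf_vars C) (rinf_system C L) y"
    unfolding sat_rinf_system_iff by (simp add: y_def)
  then show "\<exists>y. y Lo = a \<and> y Hi = b \<and> y Up = of_rat U \<and> sat_system (rinf_vars C) (rinf_system C L) y"
    by (intro exI[of _ y]) (simp add: y_def)
next
  assume "\<exists>y. y Lo = a \<and> y Hi = b \<and> y Up = of_rat U \<and> sat_system (rinf_vars C) (rinf_system C L) y"
  then obtain y where "y Lo = a" "y Hi = b" "y Up = of_rat U" "sat_system (rinf_vars C) (rinf_system C L) y"
    by blast
  then have "delay_run C (of_rat L) (of_rat U) a (y Lo_next) (\<lambda>i. y (Lo_delay i))"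
    "delay_run C (of_rat L) (of_rat U) b (y Hi_next) (\<lambda>i. y (Hi_delay i))"
    "of_rat L \<le> a" "a \<le> b" "b \<le> of_rat U"
    "a \<le> y Lo_next" "y Lo_next \<le> b" "a \<le> y Hi_next" "y Hi_next \<le> b"
    unfolding sat_rinf_system_iff by auto
  then show "Rinf_real C L a b U"
    unfolding Rinf_real_iff_endpoints R_iff_delay_run by blast
qed

theorem Rinf_least_start:
  fixes C :: "'c::finite etp"
  assumes "\<exists>a b U. Rinf C L a b U"
  shows "\<exists>amin b U. Rinf C L amin b U \<and> (\<forall>a b U. Rinf_real C L a b U \<longrightarrow> of_rat amin \<le> a)"
proof -
  let ?V = "rinf_vars C" and ?cs = "rinf_system C L"
  obtain y0 where "sat_system ?V ?cs y0"
    using assms Rinf_iff_Rinf_real Rinf_real_iff_solution by metis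
  then obtain q where q: "\<forall>v\<in>?V. q v \<in> \<rat>" "sat_system ?V ?cs q"
    and least: "\<forall>y. sat_system ?V ?cs y \<longrightarrow> q Lo \<le> y Lo"
    using rational_minimiser[OF rinf_vars_facts(1,2) finite_rinf_system rat_system_rinf_system]
      sat_rinf_system_iff by blast
  obtain amin b U where "q Lo = of_rat amin" "q Hi = of_rat b" "q Up = of_rat U"
    using q(1) rinf_vars_facts by (metis Rats_cases)
  then have "Rinf C L amin b U" "\<forall>a b U. Rinf_real C L a b U \<longrightarrow> of_rat amin \<le> a"
    using q(2) least Rinf_iff_Rinf_real Rinf_real_iff_solution by metis+
  then show ?thesis by blast
qed

lemma closed_landing_set:
  fixes C :: "'c::finite etp"
  shows "closed {w. \<exists>s. a \<le> s \<and> s \<le> b \<and> R C L w s U}"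
proof -
  let ?V = "rinf_vars C"
  define cs where "cs = run_system C L Lo Lo_next Up Lo_delay \<union>
    {aff_le (aff_const a) (aff_var Lo_next), aff_le (aff_var Lo_next) (aff_const b),
     aff_le (aff_var Up) (aff_const (of_rat U)), aff_le (aff_const (of_rat U)) (aff_var Up)}"
  have "sat_system ?V cs y \<longleftrightarrow> sat_system ?V (run_system C L Lo Lo_next Up Lo_delay) y \<and>
      a \<le> y Lo_next \<and> y Lo_next \<le> b \<and> y Up = of_rat U" for y
    unfolding cs_def sat_system_Un
    by (auto simp: sat_system_insert sat_system_empty sat_aff_le aff_val_var aff_val_const rinf_vars_facts)
  then have "{w. \<exists>s. a \<le> s \<and> s \<le> b \<and> R C L w s U} = {w. \<exists>y. y Lo = w \<and> sat_system ?V cs y}"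
    unfolding R_iff_solution by auto
  moreover have "finite cs" unfolding cs_def using finite_run_system by simp
  ultimately show ?thesis using closed_projection[OF rinf_vars_facts(1,2)] by simp
qed

text \<open>The infimum and supremum of the energies at the start of the iterations of an infinite run
  bound a fixed interval: every energy in it lands back in it, as the landing set is closed.\<close>

theorem inf_run_Rinf_real:
  fixes C :: "'c::finite etp"
  assumes "is_cycle C" "inf_run C L U w"
  shows "\<exists>a b. Rinf_real C L a b U \<and> a \<le> w"
proof -
  obtain ws where ws: "ws 0 = w" "\<And>k. R C L (ws k) (ws (Suc k)) U"
    using assms(2) unfolding inf_run_def by blast
  define X where "X = range ws"
  have bounds: "of_rat L \<le> ws k \<and> ws k \<le> of_rat U" for k
    using R_bounds[OF assms(1) ws(2)] by blast
  then have X: "X \<noteq> {}" "bdd_below X" "bdd_above X"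
    unfolding X_def by (auto intro!: bdd_belowI[of _ "of_rat L"] bdd_aboveI[of _ "of_rat U"])
  define a where "a = Inf X"
  define b where "b = Sup X"
  have ab: "a \<le> ws k" "ws k \<le> b" for k
    unfolding a_def b_def using X by (auto simp: X_def intro: cInf_lower cSup_upper)
  have "of_rat L \<le> a" "b \<le> of_rat U"
    unfolding a_def b_def X_def using bounds by (auto intro!: cInf_greatest cSup_least)
  define T where "T = {w. \<exists>s. a \<le> s \<and> s \<le> b \<and> R C L w s U}"
  have "X \<subseteq> T" unfolding X_def T_def using ws(2) ab by blast
  then have "closure X \<subseteq> T" using closed_landing_set unfolding T_def by (rule closure_minimal)
  then have "a \<in> T" "b \<in> T"
    using closure_contains_Inf[OF X(1,2)] closure_contains_Sup[OF X(1,3)] unfolding a_def b_def by auto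
  then have "Rinf_real C L a b U"
    unfolding Rinf_real_iff_endpoints T_def using \<open>of_rat L \<le> a\<close> \<open>b \<le> of_rat U\<close> ab[of 0] by auto
  then show ?thesis using ab[of 0] ws(1) by blast
qed

lemma inf_run_if_Rinf_real:
  assumes "Rinf_real C L a b U" "a \<le> w" "w \<le> b"
  shows "inf_run C L U w"
proof -
  define next_energy where "next_energy w0 = (SOME w1. a \<le> w1 \<and> w1 \<le> b \<and> R C L w0 w1 U)" for w0
  have next_energy: "a \<le> next_energy w0 \<and> next_energy w0 \<le> b \<and> R C L w0 (next_energy w0) U"
    if "a \<le> w0" "w0 \<le> b" for w0
  proof -
    have "\<exists>w1. a \<le> w1 \<and> w1 \<le> b \<and> R C L w0 w1 U"
      using assms(1) that unfolding Rinf_real_def by blast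
    then show ?thesis unfolding next_energy_def by (rule someI_ex)
  qed
  define ws where "ws k = (next_energy ^^ k) w" for k
  have "a \<le> ws k \<and> ws k \<le> b" for k
    by (induction k) (use assms(2,3) next_energy in \<open>auto simp: ws_def\<close>)
  then have "R C L (ws k) (ws (Suc k)) U" for k
    using next_energy unfolding ws_def by simp
  then show ?thesis unfolding inf_run_def ws_def by (intro exI[of _ ws]) (auto simp: ws_def)
qed

lemma inf_run_shift:
  assumes "inf_run C L U w" "0 \<le> s"
  shows "inf_run C L (U + of_int \<lceil>s\<rceil>) (w + s)"
proof -
  obtain ws where ws: "ws 0 = w" "\<And>k. R C L (ws k) (ws (Suc k)) U"
    using assms(1) unfolding inf_run_def by blast
  have "of_rat U + s \<le> real_of_rat (U + of_int \<lceil>s\<rceil>)"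
    by (simp add: of_rat_add)
  then have "R C L (ws k + s) (ws (Suc k) + s) (U + of_int \<lceil>s\<rceil>)" for k
    using R_shift[OF ws(2) assms(2)] by blast
  then show ?thesis unfolding inf_run_def using ws(1) by (intro exI[of _ "\<lambda>k. ws k + s"]) auto
qed

theorem mainTheorem7:
  fixes C :: "('c::finite) etp" and L :: rat
  assumes "is_cycle C"
    and "\<exists>a b U. Rinf C L a b U"
  shows "\<exists>amin :: rat.
           (\<exists>b U. Rinf C L amin b U) \<and>
           (\<forall>a. (\<exists>b U. Rinf C L a b U) \<longrightarrow> amin \<le> a) \<and>
           (\<forall>(w :: real) (U :: rat). w < real_of_rat amin \<longrightarrow> \<not> inf_run C L U w) \<and>
           (\<forall>w :: real. real_of_rat amin \<le> w \<longrightarrow> (\<exists>U :: rat. inf_run C L U w))"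
proof -
  obtain amin b U where Rinf: "Rinf C L amin b U"
    and least: "\<forall>a b U. Rinf_real C L a b U \<longrightarrow> of_rat amin \<le> a"
    using Rinf_least_start[OF assms(2)] by blast
  have "amin \<le> a" if "Rinf C L a b' U'" for a b' U'
    using least that unfolding Rinf_iff_Rinf_real by (metis of_rat_less_eq)
  moreover have "\<not> inf_run C L U' w" if "w < of_rat amin" for w U'
    using inf_run_Rinf_real[OF assms(1)] least that by fastforce
  moreover have "\<exists>U'. inf_run C L U' w" if "of_rat amin \<le> w" for w
  proof -
    have "inf_run C L U (of_rat amin)"
      using Rinf unfolding Rinf_iff_Rinf_real by (auto intro: inf_run_if_Rinf_real simp: Rinf_real_def)
    then show ?thesis using inf_run_shift[of C L U _ "w - of_rat amin"] that by force
  qed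
  ultimately show ?thesis using Rinf by blast
qed

end
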